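(* Let $(g,f)$ be a Riordan matrix with $g(t)=\sum_{j\ge0}g_jt^j$, $g_0=1$, possessing a type-II $B$-sequence, and let $Z(t)=\sum_{n\ge0}z_nt^n$ be the generating function of its $Z$-sequence. Then $Z'(0)=z_1=0$, or equivalently, $g_1^2=g_0g_2$.
   Context: Let $K$ be $\mathbb{R}$ or $\mathbb{C}$. A (proper) Riordan matrix is a pair $(g,f)$ of formal power series in $K[[t]]$ with $g(0)=1$, $f(0)=0$, $f'(0)\neq 0$, identified with the infinite lower triangular matrix $(d_{n,k})_{n,k\ge0}$, $d_{n,k}=[t^n]g(t)f(t)^k$; we set $d_{n,k}=0$ if $n<0$, $k<0$ or $k>n$. The $Z$-sequence of $(g,f)$ is the unique sequence whose generating function $Z(t)$ satisfies $g(t)=1/(1-tZ(f(t)))$. A type-II $B$-sequence is a sequence $(\hat b_j)_{j\ge0}$ such that $d_{n+1,0}=\sum_{j\ge0}\hat b_j d_{n-j,j}$ for all $n\ge0$. *)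

theory Defs
  imports "HOL-Computational_Algebra.Formal_Power_Series"
begin

definition riordan :: "'a::field fps \<Rightarrow> 'a fps \<Rightarrow> bool" where
  "riordan g f \<longleftrightarrow> fps_nth g 0 = 1 \<and> fps_nth f 0 = 0 \<and> fps_nth f 1 \<noteq> 0"

definition riordan_entry :: "'a::field fps \<Rightarrow> 'a fps \<Rightarrow> nat \<Rightarrow> nat \<Rightarrow> 'a" where
  "riordan_entry g f n k = (if k > n then 0 else fps_nth (g * f ^ k) n)"

definition is_Z_series :: "'a::field fps \<Rightarrow> 'a fps \<Rightarrow> 'a fps \<Rightarrow> bool" where
  "is_Z_series g f Z \<longleftrightarrow> g = inverse (1 - fps_X * fps_compose Z f)"

text \<open>Type-II B-sequence: d_{n+1,0} = sum_j b_j d_{n-j,j}; terms with j > n have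
  negative row index and vanish, so the sum ranges over j \<le> n.\<close>
definition is_typeII_B_seq :: "'a::field fps \<Rightarrow> 'a fps \<Rightarrow> (nat \<Rightarrow> 'a) \<Rightarrow> bool" where
  "is_typeII_B_seq g f b \<longleftrightarrow>
     (\<forall>n. riordan_entry g f (Suc n) 0 = (\<Sum>j\<le>n. b j * riordan_entry g f (n - j) j))"

definition has_typeII_B_seq :: "'a::field fps \<Rightarrow> 'a fps \<Rightarrow> bool" where
  "has_typeII_B_seq g f \<longleftrightarrow> (\<exists>b. is_typeII_B_seq g f b)"

end

theory Submission
  imports Defs
begin

text \<open>The B-recurrence in rows 1 and 2 reads \<open>g\<^sub>1 = b\<^sub>0 g\<^sub>0\<close> and
  \<open>g\<^sub>2 = b\<^sub>0 g\<^sub>1\<close> (the entry \<open>d\<^sub>0\<^sub>,\<^sub>1\<close> vanishes), so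
  \<open>g\<^sub>1\<^sup>2 = g\<^sub>0 g\<^sub>2\<close>. On the other hand \<open>g (1 - t Z(f)) = 1\<close> gives
  \<open>g\<^sub>0 g\<^sub>2 - g\<^sub>1\<^sup>2 = z\<^sub>1 f\<^sub>1\<close>, and \<open>f\<^sub>1 \<noteq> 0\<close>.\<close>

unbundle fps_syntax

lemma has_typeII_B_seq_coeff_square:
  assumes "has_typeII_B_seq g f"
  shows "(g $ 1)^2 = g $ 0 * g $ 2"
proof -
  obtain b where B: "\<And>n. riordan_entry g f (Suc n) 0 = (\<Sum>j\<le>n. b j * riordan_entry g f (n - j) j)"
    using assms by (auto simp: has_typeII_B_seq_def is_typeII_B_seq_def)
  have "g $ 1 = b 0 * g $ 0"
    using B[of 0] by (simp add: riordan_entry_def)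
  moreover have "g $ 2 = b 0 * g $ 1"
    using B[of 1] by (simp add: riordan_entry_def numeral_2_eq_2)
  ultimately show ?thesis
    by (simp add: power2_eq_square)
qed

lemma fps_inverse_one_minus_X_mult_coeffs:
  fixes h :: "'a::field fps"
  assumes "g = inverse (1 - fps_X * h)"
  shows "g $ 0 = 1" "g $ 1 = h $ 0" "g $ 2 = (h $ 0)^2 + h $ 1"
proof -
  have "g * (1 - fps_X * h) = 1"
    using assms by (simp add: inverse_mult_eq_1)
  then have "g = 1 + fps_X * (g * h)"
    by (simp add: algebra_simps)
  then have rec: "g $ n = (1 + fps_X * (g * h)) $ n" for n
    by simp
  show g0: "g $ 0 = 1"
    using rec[of 0] by simp
  show g1: "g $ 1 = h $ 0"
    using rec[of 1] by (simp add: fps_mult_nth g0)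
  show "g $ 2 = (h $ 0)^2 + h $ 1"
    using rec[of 2] g1 by (simp add: fps_mult_nth numeral_2_eq_2 g0 power2_eq_square)
qed

lemma fps_compose_nth_1:
  assumes "f $ 0 = 0"
  shows "(Z oo f) $ 1 = Z $ 1 * f $ 1"
  using assms by (simp add: fps_compose_nth)

lemma is_Z_series_coeff_square_defect:
  assumes "is_Z_series g f Z" and "f $ 0 = 0"
  shows "g $ 0 * g $ 2 - (g $ 1)^2 = Z $ 1 * f $ 1"
  using fps_inverse_one_minus_X_mult_coeffs[OF assms(1)[unfolded is_Z_series_def]]
    fps_compose_nth_1[OF assms(2)]
  by simp

theorem proposition3p3:
  fixes g f Z :: "'a::real_normed_field fps"
  assumes "riordan g f"
    and "has_typeII_B_seq g f"
    and "is_Z_series g f Z"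
  shows "fps_nth Z 1 = 0 \<and> fps_nth (fps_deriv Z) 0 = 0
         \<and> (fps_nth g 1)^2 = fps_nth g 0 * fps_nth g 2"
proof -
  have f0: "f $ 0 = 0" and f1: "f $ 1 \<noteq> 0"
    using assms(1) by (auto simp: riordan_def)
  have square: "(g $ 1)^2 = g $ 0 * g $ 2"
    using has_typeII_B_seq_coeff_square[OF assms(2)] .
  then have "Z $ 1 * f $ 1 = 0"
    using is_Z_series_coeff_square_defect[OF assms(3) f0] by simp
  then have "Z $ 1 = 0"
    using f1 by simp
  then show ?thesis
    using square by simp
qed

end
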